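(* For every $\beta\in B_n$, every entry of the matrix $\phi(\beta)$ is of the form $a\beta$ for some $a\in\mathbf{Z}[F_n]$.
   Context: The braid group $B_n$ ($n\ge2$) has generators $\sigma_1,\dots,\sigma_{n-1}$ with relations $\sigma_i\sigma_j=\sigma_j\sigma_i$ for $|i-j|>1$ and $\sigma_i\sigma_j\sigma_i=\sigma_j\sigma_i\sigma_j$ for $|i-j|=1$. Let $F_n$ be the free group on $g_1,\dots,g_n$. The semidirect product $F_n\rtimes B_n$ is the group generated by $F_n$ and $B_n$ subject to the additional relations $g_{i+1}\sigma_i=\sigma_i g_i$, $g_i\sigma_i=\sigma_i g_i g_{i+1}g_i^{-1}$, and $g_j\sigma_i=\sigma_i g_j$ for $j\notin\{i,i+1\}$; $\mathbf{Z}[F_n]\subset\mathbf{Z}[F_n\rtimes B_n]$ are the group rings. For $i=1,\dots,n-1$ let $R_i=\begin{bmatrix}0&g_i\\1&1-g_i\end{bmatrix}$. Let $\phi$ be the homomorphism from $B_n$ to the group of invertible $n\times n$ matrices over $\mathbf{Z}[F_n\rtimes B_n]$ (usual matrix multiplication) given by $\phi(\sigma_i)=\sigma_i\cdot\mathrm{diag}(I_{i-1},R_i,I_{n-i-1})$, where the scalar $\sigma_i$ multiplies every entry on the left. *)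

theory Defs
  imports "Jordan_Normal_Form.Matrix"
begin

(* The ring R plays the role of Z[F_n \<rtimes> B_n]: g i, g' i are the images of g_i and g_i^{-1},
   s i, s' i the images of sigma_i and sigma_i^{-1}.  Indices are 1-based as in the paper;
   matrix rows/columns are 0-based (row j of the paper is row j-1 here). *)

inductive_set ZF :: "nat \<Rightarrow> (nat \<Rightarrow> 'a::ring_1) \<Rightarrow> (nat \<Rightarrow> 'a) \<Rightarrow> 'a set"
  for n :: nat and g g' :: "nat \<Rightarrow> 'a" where
  one: "1 \<in> ZF n g g'"
| gen: "1 \<le> i \<Longrightarrow> i \<le> n \<Longrightarrow> g i \<in> ZF n g g'"
| geninv: "1 \<le> i \<Longrightarrow> i \<le> n \<Longrightarrow> g' i \<in> ZF n g g'"
| add: "a \<in> ZF n g g' \<Longrightarrow> b \<in> ZF n g g' \<Longrightarrow> a + b \<in> ZF n g g'"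
| neg: "a \<in> ZF n g g' \<Longrightarrow> - a \<in> ZF n g g'"
| mult: "a \<in> ZF n g g' \<Longrightarrow> b \<in> ZF n g g' \<Longrightarrow> a * b \<in> ZF n g g'"

text \<open>diag(I_{i-1}, R_i, I_{n-i-1}), 0-based entries.\<close>
definition blockR :: "(nat \<Rightarrow> 'a::ring_1) \<Rightarrow> nat \<Rightarrow> nat \<Rightarrow> nat \<Rightarrow> 'a" where
  "blockR g i j k =
     (if j = i - 1 \<and> k = i - 1 then 0
      else if j = i - 1 \<and> k = i then g i
      else if j = i \<and> k = i - 1 then 1
      else if j = i \<and> k = i then 1 - g i
      else if j = k then 1 else 0)"

text \<open>diag(I_{i-1}, R_i^{-1}, I_{n-i-1}) with R_i^{-1} = [[1 - g_i^{-1}, 1], [g_i^{-1}, 0]].\<close>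
definition blockRinv :: "(nat \<Rightarrow> 'a::ring_1) \<Rightarrow> nat \<Rightarrow> nat \<Rightarrow> nat \<Rightarrow> 'a" where
  "blockRinv g' i j k =
     (if j = i - 1 \<and> k = i - 1 then 1 - g' i
      else if j = i - 1 \<and> k = i then 1
      else if j = i \<and> k = i - 1 then g' i
      else if j = i \<and> k = i then 0
      else if j = k then 1 else 0)"

definition phi_gen :: "nat \<Rightarrow> (nat \<Rightarrow> 'a::ring_1) \<Rightarrow> (nat \<Rightarrow> 'a) \<Rightarrow> nat \<Rightarrow> 'a mat" where
  "phi_gen n s g i = mat n n (\<lambda>(j, k). s i * blockR g i j k)"

text \<open>phi(sigma_i^{-1}) = phi(sigma_i)^{-1} = diag(I, R_i^{-1}, I) \<cdot> sigma_i^{-1} (scalar on the right).\<close>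
definition phi_gen_inv :: "nat \<Rightarrow> (nat \<Rightarrow> 'a::ring_1) \<Rightarrow> (nat \<Rightarrow> 'a) \<Rightarrow> nat \<Rightarrow> 'a mat" where
  "phi_gen_inv n s' g' i = mat n n (\<lambda>(j, k). blockRinv g' i j k * s' i)"

text \<open>Braid words: (i, True) = sigma_i, (i, False) = sigma_i^{-1}.\<close>
definition braid_word :: "nat \<Rightarrow> (nat \<times> bool) list \<Rightarrow> bool" where
  "braid_word n w \<longleftrightarrow> (\<forall>(i, b) \<in> set w. 1 \<le> i \<and> i < n)"

definition phi_word :: "nat \<Rightarrow> (nat \<Rightarrow> 'a::ring_1) \<Rightarrow> (nat \<Rightarrow> 'a) \<Rightarrow> (nat \<Rightarrow> 'a) \<Rightarrow> (nat \<Rightarrow> 'a)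
    \<Rightarrow> (nat \<times> bool) list \<Rightarrow> 'a mat" where
  "phi_word n s s' g g' w =
     foldr (\<lambda>(i, b) M. (if b then phi_gen n s g i else phi_gen_inv n s' g' i) * M) w (1\<^sub>m n)"

definition braid_elt :: "(nat \<Rightarrow> 'a::ring_1) \<Rightarrow> (nat \<Rightarrow> 'a) \<Rightarrow> (nat \<times> bool) list \<Rightarrow> 'a" where
  "braid_elt s s' w = foldr (\<lambda>(i, b) x. (if b then s i else s' i) * x) w 1"

end

theory Submission
  imports Defs
begin

text \<open>
  Conjugation by \<open>\<sigma>\<^sub>i\<^sup>\<plusminus>\<^sup>1\<close> is the Artin action on \<open>F\<^sub>n\<close>, hence maps \<open>\<int>[F\<^sub>n]\<close> into itself, so that
  \<open>\<sigma> b = (\<sigma> b \<sigma>\<^sup>-\<^sup>1) \<sigma> \<in> \<int>[F\<^sub>n] \<sigma>\<close> for \<open>b \<in> \<int>[F\<^sub>n]\<close>. The entries of \<open>\<phi>(\<sigma>)\<close> lie in \<open>\<int>[F\<^sub>n] \<sigma>\<close>; if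
  those of \<open>\<phi>(\<beta>)\<close> lie in \<open>\<int>[F\<^sub>n] \<beta>\<close>, an entry of \<open>\<phi>(\<sigma>) \<phi>(\<beta>)\<close> is a sum of terms
  \<open>a \<sigma> b \<beta> = a (\<sigma> b \<sigma>\<^sup>-\<^sup>1) \<sigma> \<beta> \<in> \<int>[F\<^sub>n] \<sigma> \<beta>\<close>. Induction along a word for \<open>\<beta>\<close> concludes.
\<close>

lemma ZF_zero: "0 \<in> ZF n g g'"
  using ZF.add[OF ZF.one ZF.neg[OF ZF.one]] by simp

lemma ZF_diff: "a \<in> ZF n g g' \<Longrightarrow> b \<in> ZF n g g' \<Longrightarrow> a - b \<in> ZF n g g'"
  unfolding diff_conv_add_uminus by (intro ZF.add ZF.neg)

lemma ZF_sum: "(\<And>l. l \<in> A \<Longrightarrow> f l \<in> ZF n g g') \<Longrightarrow> sum f A \<in> ZF n g g'"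
  by (induction A rule: infinite_finite_induct) (auto intro: ZF_zero ZF.add)

lemma blockR_in_ZF:
  assumes "1 \<le> i" "i \<le> n"
  shows "blockR g i j k \<in> ZF n g g'"
proof -
  have "1 - g i \<in> ZF n g g'" using assms by (intro ZF_diff ZF.one ZF.gen)
  with assms show ?thesis unfolding blockR_def by (simp add: ZF_zero ZF.one ZF.gen)
qed

lemma blockRinv_in_ZF:
  assumes "1 \<le> i" "i \<le> n"
  shows "blockRinv g' i j k \<in> ZF n g g'"
proof -
  have "1 - g' i \<in> ZF n g g'" using assms by (intro ZF_diff ZF.one ZF.geninv)
  with assms show ?thesis unfolding blockRinv_def by (simp add: ZF_zero ZF.one ZF.geninv)
qed

lemma conj_mult:
  fixes x x' a b :: "'a::ring_1"
  assumes "x' * x = 1"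
  shows "(x * a * x') * (x * b * x') = x * (a * b) * x'"
proof -
  have "(x * a * x') * (x * b * x') = x * a * (x' * x) * b * x'"
    by (simp add: mult.assoc)
  with assms show ?thesis by (simp add: mult.assoc)
qed

lemma conj_eq_if_intertwines:
  fixes x x' y z :: "'a::ring_1"
  assumes "y * x = x * z" "x' * x = 1"
  shows "x' * y * x = z"
  using assms by (metis mult.assoc mult_1)

lemma conj_of_inverse:
  fixes x x' a b c d :: "'a::ring_1"
  assumes "x * x' = 1" "x' * x = 1" "a * b = 1" "d * c = 1" "x * a * x' = c"
  shows "x * b * x' = d"
proof -
  have "x * b * x' = d * c * (x * b * x')" using assms(4) by simp
  also have "\<dots> = d * ((x * a * x') * (x * b * x'))" using assms(5) by (simp add: mult.assoc)
  also have "\<dots> = d * (x * (a * b) * x')" by (simp only: conj_mult[OF assms(2)])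
  also have "\<dots> = d" using assms(1,3) by simp
  finally show ?thesis .
qed

text \<open>Conjugation by a unit is a ring endomorphism, so it preserves \<open>\<int>[F\<^sub>n]\<close> once it does so on generators.\<close>

lemma conj_ZF_closed:
  fixes x x' :: "'a::ring_1"
  assumes units: "x * x' = 1" "x' * x = 1"
    and gens: "\<And>j. 1 \<le> j \<Longrightarrow> j \<le> n \<Longrightarrow> x * g j * x' \<in> ZF n g g' \<and> x * g' j * x' \<in> ZF n g g'"
    and c: "c \<in> ZF n g g'"
  shows "x * c * x' \<in> ZF n g g'"
  using c
proof (induction rule: ZF.induct)
  case one
  then show ?case using units ZF.one by simp
next
  case (add a b)
  then show ?case by (simp add: distrib_left distrib_right ZF.add)
next
  case (neg a)
  then show ?case by (simp add: ZF.neg)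
next
  case (mult a b)
  then show ?case using conj_mult[OF units(2), of a b] ZF.mult by metis
qed (use gens in auto)

lemma right_multiple_ZF:
  fixes x x' y :: "'a::ring_1"
  assumes "x' * x = 1" "y * x' \<in> ZF n g g'"
  shows "\<exists>b\<in>ZF n g g'. y = b * x"
proof
  show "y = (y * x') * x" using assms(1) by (simp add: mult.assoc)
qed (use assms(2) in simp)

lemma mult_mat_right_multiple_ZF:
  fixes N M :: "'a::ring_1 mat"
  assumes dims: "N \<in> carrier_mat r d" "M \<in> carrier_mat d m"
    and N: "\<And>j l a. j < r \<Longrightarrow> l < d \<Longrightarrow> a \<in> ZF n g g' \<Longrightarrow> \<exists>b\<in>ZF n g g'. N $$ (j, l) * a = b * x"
    and M: "\<And>l k. l < d \<Longrightarrow> k < m \<Longrightarrow> \<exists>a\<in>ZF n g g'. M $$ (l, k) = a * y"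
    and jk: "j < r" "k < m"
  shows "\<exists>a\<in>ZF n g g'. (N * M) $$ (j, k) = a * (x * y)"
proof -
  have "\<forall>l. \<exists>a. l < d \<longrightarrow> a \<in> ZF n g g' \<and> M $$ (l, k) = a * y"
    using M[OF _ jk(2)] by blast
  from choice[OF this] obtain A
    where A: "\<forall>l. l < d \<longrightarrow> A l \<in> ZF n g g' \<and> M $$ (l, k) = A l * y"
    by blast
  have "\<forall>l. \<exists>b. l < d \<longrightarrow> b \<in> ZF n g g' \<and> N $$ (j, l) * A l = b * x"
    using N[OF jk(1)] A by blast
  from choice[OF this] obtain C
    where C: "\<forall>l. l < d \<longrightarrow> C l \<in> ZF n g g' \<and> N $$ (j, l) * A l = C l * x"
    by blast
  have "(N * M) $$ (j, k) = (\<Sum>l = 0..<d. N $$ (j, l) * M $$ (l, k))"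
    using dims jk by (simp add: scalar_prod_def)
  also have "\<dots> = (\<Sum>l = 0..<d. C l * (x * y))"
    using A C by (intro sum.cong) (auto simp: mult.assoc[symmetric])
  also have "\<dots> = (\<Sum>l = 0..<d. C l) * (x * y)"
    by (simp add: sum_distrib_right)
  finally have "(N * M) $$ (j, k) = (\<Sum>l = 0..<d. C l) * (x * y)" .
  moreover have "(\<Sum>l = 0..<d. C l) \<in> ZF n g g'" using C by (intro ZF_sum) auto
  ultimately show ?thesis by blast
qed

locale artin_action =
  fixes n :: nat and s s' g g' :: "nat \<Rightarrow> 'a::ring_1"
  assumes g_inv: "\<And>i. 1 \<le> i \<Longrightarrow> i \<le> n \<Longrightarrow> g i * g' i = 1 \<and> g' i * g i = 1"
    and s_inv: "\<And>i. 1 \<le> i \<Longrightarrow> i < n \<Longrightarrow> s i * s' i = 1 \<and> s' i * s i = 1"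
    and semi1: "\<And>i. 1 \<le> i \<Longrightarrow> i < n \<Longrightarrow> g (i + 1) * s i = s i * g i"
    and semi2: "\<And>i. 1 \<le> i \<Longrightarrow> i < n \<Longrightarrow> g i * s i = s i * g i * g (i + 1) * g' i"
    and semi3: "\<And>i j. 1 \<le> i \<Longrightarrow> i < n \<Longrightarrow> 1 \<le> j \<Longrightarrow> j \<le> n \<Longrightarrow> j \<noteq> i \<Longrightarrow> j \<noteq> i + 1 \<Longrightarrow>
                  g j * s i = s i * g j"
begin

lemma g_cancel [simp]:
  "1 \<le> j \<Longrightarrow> j \<le> n \<Longrightarrow> g j * (g' j * x) = x"
  "1 \<le> j \<Longrightarrow> j \<le> n \<Longrightarrow> g' j * (g j * x) = x"
  using g_inv by (simp_all add: mult.assoc[symmetric])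

lemma s_cancel [simp]:
  "1 \<le> i \<Longrightarrow> i < n \<Longrightarrow> s i * (s' i * x) = x"
  "1 \<le> i \<Longrightarrow> i < n \<Longrightarrow> s' i * (s i * x) = x"
  using s_inv by (simp_all add: mult.assoc[symmetric])

lemma s'_conj_g:
  assumes i: "1 \<le> i" "i < n" and j: "1 \<le> j" "j \<le> n"
  shows "s' i * g j * s i =
    (if j = i then g i * g (i + 1) * g' i else if j = i + 1 then g i else g j)"
proof -
  have si: "s' i * s i = 1" using s_inv[OF i] by simp
  consider "j = i" | "j = i + 1" | "j \<noteq> i" "j \<noteq> i + 1" by blast
  then show ?thesis
  proof cases
    case 1
    with semi2[OF i] i show ?thesis by (simp add: mult.assoc)
  next
    case 2
    with semi1[OF i] show ?thesis by (simp add: conj_eq_if_intertwines[OF _ si])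
  next
    case 3
    with semi3[OF i j] show ?thesis by (simp add: conj_eq_if_intertwines[OF _ si])
  qed
qed

lemma s'_conj_g':
  assumes i: "1 \<le> i" "i < n" and j: "1 \<le> j" "j \<le> n"
  shows "s' i * g' j * s i =
    (if j = i then g i * g' (i + 1) * g' i else if j = i + 1 then g' i else g' j)"
  using i j
  by (intro conj_of_inverse[OF conjunct2[OF s_inv] conjunct1[OF s_inv] conjunct1[OF g_inv]
        _ s'_conj_g[OF i j]]) (use g_inv in \<open>auto simp: mult.assoc\<close>)

lemma s_conj_g:
  assumes i: "1 \<le> i" "i < n" and j: "1 \<le> j" "j \<le> n"
  shows "s i * g j * s' i =
    (if j = i then g (i + 1) else if j = i + 1 then g' (i + 1) * g i * g (i + 1) else g j)"
proof -
  have conj_back: "s i * (s' i * c * s i) * s' i = c" for c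
    using i s_inv[OF i] by (simp add: mult.assoc)
  consider "j = i" | "j = i + 1" | "j \<noteq> i" "j \<noteq> i + 1" by blast
  then show ?thesis
  proof cases
    case 1
    have "s' i * g (i + 1) * s i = g i" using s'_conj_g[of i "i + 1"] i by simp
    with conj_back[of "g (i + 1)"] 1 show ?thesis by simp
  next
    case 2
    have "s' i * (g' (i + 1) * g i * g (i + 1)) * s i
        = (s' i * g' (i + 1) * s i) * (s' i * g i * s i) * (s' i * g (i + 1) * s i)"
      using conj_mult[of "s i" "s' i"] s_inv[OF i] by (simp only:)
    also have "\<dots> = g' i * (g i * g (i + 1) * g' i) * g i"
      using i by (simp add: s'_conj_g s'_conj_g')
    also have "\<dots> = g (i + 1)"
      using i g_inv[of i] by (simp add: mult.assoc)
    finally have "s' i * (g' (i + 1) * g i * g (i + 1)) * s i = g (i + 1)" .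
    with conj_back[of "g' (i + 1) * g i * g (i + 1)"] 2 show ?thesis by simp
  next
    case 3
    then have "s' i * g j * s i = g j" using s'_conj_g[OF i j] by simp
    with conj_back[of "g j"] 3 show ?thesis by simp
  qed
qed

lemma s_conj_g':
  assumes i: "1 \<le> i" "i < n" and j: "1 \<le> j" "j \<le> n"
  shows "s i * g' j * s' i =
    (if j = i then g' (i + 1) else if j = i + 1 then g' (i + 1) * g' i * g (i + 1) else g' j)"
  using i j
  by (intro conj_of_inverse[OF conjunct1[OF s_inv] conjunct2[OF s_inv] conjunct1[OF g_inv]
        _ s_conj_g[OF i j]]) (auto simp: mult.assoc g_inv)

lemma s_conj_ZF:
  assumes i: "1 \<le> i" "i < n" and c: "c \<in> ZF n g g'"
  shows "s i * c * s' i \<in> ZF n g g'"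
proof (rule conj_ZF_closed[OF _ _ _ c])
  show "s i * s' i = 1" "s' i * s i = 1" using s_inv[OF i] by auto
  show "s i * g j * s' i \<in> ZF n g g' \<and> s i * g' j * s' i \<in> ZF n g g'"
    if "1 \<le> j" "j \<le> n" for j
    using i that by (simp add: s_conj_g s_conj_g' ZF.gen ZF.geninv ZF.mult)
qed

lemma s'_conj_ZF:
  assumes i: "1 \<le> i" "i < n" and c: "c \<in> ZF n g g'"
  shows "s' i * c * s i \<in> ZF n g g'"
proof (rule conj_ZF_closed[OF _ _ _ c])
  show "s' i * s i = 1" "s i * s' i = 1" using s_inv[OF i] by auto
  show "s' i * g j * s i \<in> ZF n g g' \<and> s' i * g' j * s i \<in> ZF n g g'"
    if "1 \<le> j" "j \<le> n" for j
    using i that by (simp add: s'_conj_g s'_conj_g' ZF.gen ZF.geninv ZF.mult)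
qed

lemma phi_gen_entry_mult:
  assumes i: "1 \<le> i" "i < n" and jl: "j < n" "l < n" and a: "a \<in> ZF n g g'"
  shows "\<exists>b\<in>ZF n g g'. phi_gen n s g i $$ (j, l) * a = b * s i"
proof (rule right_multiple_ZF)
  show "s' i * s i = 1" using s_inv[OF i] by simp
  have "phi_gen n s g i $$ (j, l) * a * s' i = s i * (blockR g i j l * a) * s' i"
    using jl by (simp add: phi_gen_def mult.assoc)
  also have "\<dots> \<in> ZF n g g'"
    using i a by (intro s_conj_ZF ZF.mult blockR_in_ZF) auto
  finally show "phi_gen n s g i $$ (j, l) * a * s' i \<in> ZF n g g'" .
qed

lemma phi_gen_inv_entry_mult:
  assumes i: "1 \<le> i" "i < n" and jl: "j < n" "l < n" and a: "a \<in> ZF n g g'"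
  shows "\<exists>b\<in>ZF n g g'. phi_gen_inv n s' g' i $$ (j, l) * a = b * s' i"
proof (rule right_multiple_ZF)
  show "s i * s' i = 1" using s_inv[OF i] by simp
  have "blockRinv g' i j l * (s' i * a * s i) \<in> ZF n g g'"
    using i a by (simp add: blockRinv_in_ZF s'_conj_ZF ZF.mult)
  then show "phi_gen_inv n s' g' i $$ (j, l) * a * s i \<in> ZF n g g'"
    using jl by (simp add: phi_gen_inv_def mult.assoc)
qed

lemma phi_word_entries:
  assumes "braid_word n w"
  shows "phi_word n s s' g g' w \<in> carrier_mat n n \<and>
    (\<forall>j<n. \<forall>k<n. \<exists>a\<in>ZF n g g'. phi_word n s s' g g' w $$ (j, k) = a * braid_elt s s' w)"
  using assms
proof (induction w)
  case Nil
  show ?case by (auto simp: phi_word_def braid_elt_def intro: ZF.one ZF_zero)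
next
  case (Cons x w)
  obtain i b where x: "x = (i, b)" by force
  have i: "1 \<le> i" "i < n" and w: "braid_word n w"
    using Cons.prems x by (auto simp: braid_word_def)
  define G where "G = (if b then phi_gen n s g i else phi_gen_inv n s' g' i)"
  define t where "t = (if b then s i else s' i)"
  have G: "G \<in> carrier_mat n n" by (simp add: G_def phi_gen_def phi_gen_inv_def)
  have G_entries: "\<exists>c\<in>ZF n g g'. G $$ (j, l) * a = c * t"
    if "j < n" "l < n" "a \<in> ZF n g g'" for j l a
    using phi_gen_entry_mult[OF i that] phi_gen_inv_entry_mult[OF i that]
    by (simp add: G_def t_def)
  have "phi_word n s s' g g' (x # w) = G * phi_word n s s' g g' w"
    "braid_elt s s' (x # w) = t * braid_elt s s' w"
    by (simp_all add: x G_def t_def phi_word_def braid_elt_def)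
  with Cons.IH[OF w] G G_entries show ?case
    by (auto intro: mult_mat_right_multiple_ZF)
qed

end

theorem lemma3p2:
  fixes n :: nat and s s' g g' :: "nat \<Rightarrow> 'a::ring_1" and w :: "(nat \<times> bool) list"
  assumes n2: "n \<ge> 2"
    and g_inv: "\<And>i. 1 \<le> i \<Longrightarrow> i \<le> n \<Longrightarrow> g i * g' i = 1 \<and> g' i * g i = 1"
    and s_inv: "\<And>i. 1 \<le> i \<Longrightarrow> i < n \<Longrightarrow> s i * s' i = 1 \<and> s' i * s i = 1"
    and braid_comm: "\<And>i j. 1 \<le> i \<Longrightarrow> i < n \<Longrightarrow> 1 \<le> j \<Longrightarrow> j < n \<Longrightarrow>
                       i + 1 < j \<or> j + 1 < i \<Longrightarrow> s i * s j = s j * s i"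
    and braid_rel: "\<And>i j. 1 \<le> i \<Longrightarrow> i < n \<Longrightarrow> 1 \<le> j \<Longrightarrow> j < n \<Longrightarrow>
                       i = j + 1 \<or> j = i + 1 \<Longrightarrow> s i * s j * s i = s j * s i * s j"
    and semi1: "\<And>i. 1 \<le> i \<Longrightarrow> i < n \<Longrightarrow> g (i + 1) * s i = s i * g i"
    and semi2: "\<And>i. 1 \<le> i \<Longrightarrow> i < n \<Longrightarrow> g i * s i = s i * g i * g (i + 1) * g' i"
    and semi3: "\<And>i j. 1 \<le> i \<Longrightarrow> i < n \<Longrightarrow> 1 \<le> j \<Longrightarrow> j \<le> n \<Longrightarrow> j \<noteq> i \<Longrightarrow> j \<noteq> i + 1 \<Longrightarrow>
                       g j * s i = s i * g j"
    and w: "braid_word n w"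
  shows "\<forall>j < n. \<forall>k < n. \<exists>a \<in> ZF n g g'.
           phi_word n s s' g g' w $$ (j, k) = a * braid_elt s s' w"
proof -
  interpret artin_action n s s' g g'
    using g_inv s_inv semi1 semi2 semi3 by unfold_locales auto
  show ?thesis using phi_word_entries[OF w] by blast
qed

end
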